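(* Let $A\subseteq\mathbb{R}^d$ be a connected open set and $B\subseteq\mathbb{R}^d$ a bounded open set with $C^1$ boundary such that $\partial B\subseteq A$ and such that the boundary of each connected component of $B$ is connected. Then $A\setminus\overline B$ is connected. *)

theory Defs
  imports "HOL-Analysis.Analysis"
begin

definition C1_fun :: "('a::euclidean_space \<Rightarrow> real) \<Rightarrow> bool" where
  "C1_fun h \<longleftrightarrow> (\<exists>G :: 'a \<Rightarrow> 'a.
      (\<forall>x. (h has_derivative (\<lambda>v. G x \<bullet> v)) (at x)) \<and> continuous_on UNIV G)"

text \<open>An open set B has C^1 boundary: near every boundary point p, after a choice of
  orthonormal coordinates whose last axis is the unit vector n, B is the region below
  the graph of a C^1 function of the remaining coordinates. The graph function is
  encoded as a C^1 function h on the whole space that is constant along n,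
  i.e. h x depends only on the orthogonal projection of x onto the hyperplane orthogonal to n.\<close>
definition C1_boundary :: "'a::euclidean_space set \<Rightarrow> bool" where
  "C1_boundary B \<longleftrightarrow>
     (\<forall>p\<in>frontier B. \<exists>U n h.
        open U \<and> p \<in> U \<and> norm n = 1 \<and> C1_fun h \<and>
        (\<forall>x. h x = h (x - (x \<bullet> n) *\<^sub>R n)) \<and>
        B \<inter> U = {x \<in> U. x \<bullet> n < h x})"

end

theory Submission
  imports Defs
begin

text \<open>Near a point of the boundary, a \<open>C\<^sup>1\<close> domain looks like the region below a continuous graph
  inside a small cylinder. Both the part of the cylinder below the graph and the part above it are
  connected, and every boundary point in the cylinder is a limit of points above the graph.
  Now suppose \<open>A - closure B\<close> splits into two nonempty disjoint open pieces \<open>P\<^sub>1\<close>, \<open>P\<^sub>2\<close>.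
  Because the exterior is locally connected at the boundary, \<open>\<partial>B\<close> splits into the points adjacent
  to \<open>P\<^sub>1\<close> and those adjacent to \<open>P\<^sub>2\<close>; because the boundary of every component of \<open>B\<close> is connected,
  each component of \<open>B\<close> is attached to exactly one of the two pieces. Adding to each \<open>P\<^sub>i\<close> its
  boundary points and its attached components of \<open>B\<close> yields a separation of \<open>A\<close>.\<close>

definition two_sided_nbhd :: "'a::topological_space set \<Rightarrow> 'a set \<Rightarrow> bool" where
  "two_sided_nbhd B N \<longleftrightarrow>
     open N \<and> connected (N - closure B) \<and> connected (N \<inter> B) \<and>
     N \<inter> frontier B \<subseteq> closure (N - closure B)"

subsection \<open>Regions below a graph\<close>

lemma connected_if_segments_to_convex:
  fixes S T :: "'a::real_normed_vector set"
  assumes "convex T" "T \<noteq> {}" "T \<subseteq> S" "\<And>x. x \<in> S \<Longrightarrow> \<exists>y\<in>T. closed_segment x y \<subseteq> S"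
  shows "connected S"
proof -
  obtain y0 where y0: "y0 \<in> T" using assms(2) by blast
  have "connected_component S x y0" if "x \<in> S" for x
  proof -
    obtain y where y: "y \<in> T" "closed_segment x y \<subseteq> S" using assms(4) \<open>x \<in> S\<close> by blast
    have "connected (closed_segment x y \<union> T)"
      using y by (intro connected_Un) (auto simp: convex_connected assms(1))
    then show ?thesis unfolding connected_component_def
      using y y0 assms(3) by (intro exI[of _ "closed_segment x y \<union> T"]) auto
  qed
  then show ?thesis unfolding connected_iff_connected_component
    by (metis connected_component_sym connected_component_trans)
qed

text \<open>The region above the graph of \<open>h\<close> with respect to \<open>n\<close> is the region below the graph of
  \<open>-h\<close> with respect to \<open>-n\<close>, so these one-sided lemmas serve for both sides.\<close>

lemma connected_strict_subgraph:
  fixes N :: "'a::real_inner set" and h :: "'a \<Rightarrow> real"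
  assumes N: "convex N" and n: "n \<bullet> n = 1" and h: "\<And>x s. h (x + s *\<^sub>R n) = h x"
    and proj: "\<And>x. x \<in> N \<Longrightarrow> x + (t - x \<bullet> n) *\<^sub>R n \<in> N"
    and below: "\<And>x. x \<in> N \<Longrightarrow> t < h x"
  shows "connected {x \<in> N. x \<bullet> n < h x}"
proof (cases "N = {}")
  case False
  let ?T = "N \<inter> {x. n \<bullet> x = t}"
  have proj_T: "x + (t - x \<bullet> n) *\<^sub>R n \<in> ?T" if "x \<in> N" for x
    using proj[OF that] n by (simp add: inner_add_right inner_commute)
  show ?thesis
  proof (rule connected_if_segments_to_convex)
    show "convex ?T" using N by (simp add: convex_Int convex_hyperplane)
    show "?T \<noteq> {}" using False proj_T by blast
    show "?T \<subseteq> {x \<in> N. x \<bullet> n < h x}" using below by (auto simp: inner_commute)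
  next
    fix x assume x: "x \<in> {x \<in> N. x \<bullet> n < h x}"
    let ?y = "x + (t - x \<bullet> n) *\<^sub>R n"
    have "closed_segment x ?y \<subseteq> {x \<in> N. x \<bullet> n < h x}"
    proof
      fix z assume z: "z \<in> closed_segment x ?y"
      then obtain u where u: "0 \<le> u" "u \<le> 1" "z = (1 - u) *\<^sub>R x + u *\<^sub>R ?y"
        unfolding in_segment by blast
      have "z \<in> N" using z closed_segment_subset[OF _ proj N] x by blast
      have z_eq: "z = x + (u * (t - x \<bullet> n)) *\<^sub>R n" using u(3) by (simp add: algebra_simps)
      have "z \<bullet> n = (1 - u) * (x \<bullet> n) + u * t" using n by (simp add: z_eq inner_add_left algebra_simps)
      also have "\<dots> < h x" using convex_bound_lt[of "x \<bullet> n" "h x" t "1 - u" u] x below u by simp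
      also have "\<dots> = h z" using h by (simp add: z_eq)
      finally show "z \<in> {x \<in> N. x \<bullet> n < h x}" using \<open>z \<in> N\<close> by simp
    qed
    then show "\<exists>y\<in>?T. closed_segment x y \<subseteq> {x \<in> N. x \<bullet> n < h x}" using proj_T x by blast
  qed
qed simp

lemma in_closure_strict_subgraph:
  fixes N :: "'a::real_inner set" and h :: "'a \<Rightarrow> real"
  assumes N: "open N" "q \<in> N" and n: "n \<bullet> n = 1" and h: "\<And>x s. h (x + s *\<^sub>R n) = h x"
    and q: "q \<bullet> n \<le> h q"
  shows "q \<in> closure {x \<in> N. x \<bullet> n < h x}"
  unfolding closure_approachable
proof (intro allI impI)
  fix e :: real assume "e > 0"
  obtain r where r: "r > 0" "ball q r \<subseteq> N" using openE[OF N] by blast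
  define s where "s = min e r / 2"
  have s: "0 < s" "s < e" "s < r" using \<open>e > 0\<close> r by (auto simp: s_def)
  define y where "y = q + (- s) *\<^sub>R n"
  have dist_y: "dist y q = s" using s n by (simp add: y_def dist_norm norm_eq_sqrt_inner)
  have "y \<in> N" using r s dist_y by (auto simp: dist_commute)
  moreover have "y \<bullet> n < h y"
    using q s n h[of q "- s"] by (simp add: y_def inner_diff_left)
  ultimately show "\<exists>y\<in>{x \<in> N. x \<bullet> n < h x}. dist y q < e" using dist_y s by auto
qed

lemma cylinder_between_levels:
  fixes p n :: "'a::real_inner" and h :: "'a \<Rightarrow> real"
  assumes n: "n \<bullet> n = 1" and h: "\<And>x s. h (x + s *\<^sub>R n) = h x" "isCont h p"
    and hp: "h p = p \<bullet> n" and "r > 0"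
  obtains N t\<^sub>1 t\<^sub>2 where "convex N" "open N" "p \<in> N" "N \<subseteq> ball p r"
    "\<And>x. x \<in> N \<Longrightarrow> t\<^sub>1 < h x \<and> h x < t\<^sub>2"
    "\<And>x. x \<in> N \<Longrightarrow> x + (t\<^sub>1 - x \<bullet> n) *\<^sub>R n \<in> N"
    "\<And>x. x \<in> N \<Longrightarrow> x + (t\<^sub>2 - x \<bullet> n) *\<^sub>R n \<in> N"
proof -
  define c where "c = p \<bullet> n"
  define \<epsilon> where "\<epsilon> = r / 2"
  have "\<epsilon> > 0" using \<open>r > 0\<close> by (simp add: \<epsilon>_def)
  then obtain \<delta> where \<delta>: "\<delta> > 0" "\<delta> \<le> \<epsilon>" "\<And>y. dist y p < \<delta> \<Longrightarrow> \<bar>h y - c\<bar> < \<epsilon> / 2"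
    using h(2) hp unfolding continuous_at_eps_delta c_def dist_real_def
    by (metis half_gt_zero min.cobounded1 min.cobounded2 min_less_iff_conj)
  define pr where "pr x = x - (x \<bullet> n) *\<^sub>R n" for x
  have pr: "bounded_linear pr" unfolding pr_def
    by (intro bounded_linear_sub bounded_linear_ident bounded_linear_scaleR_left
        bounded_linear_compose[of "\<lambda>r. r *\<^sub>R n"] bounded_linear_inner_left)
  have pr_shift: "pr (x + s *\<^sub>R n) = pr x" for x s
    using n by (simp add: pr_def inner_add_left algebra_simps)
  define N where "N = pr -` ball (pr p) \<delta> \<inter> (\<lambda>x. x \<bullet> n) -` ball c \<epsilon>"
  have N_iff: "x \<in> N \<longleftrightarrow> norm (pr x - pr p) < \<delta> \<and> \<bar>x \<bullet> n - c\<bar> < \<epsilon>" for x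
    by (simp add: N_def dist_norm norm_minus_commute abs_minus_commute)
  have vertical: "x + (t - x \<bullet> n) *\<^sub>R n \<in> N" if "x \<in> N" "\<bar>t - c\<bar> < \<epsilon>" for x t
    using that n by (simp add: N_iff pr_shift inner_add_left)
  have h_near_c: "\<bar>h x - c\<bar> < \<epsilon> / 2" if "x \<in> N" for x
  proof -
    let ?y = "x + (c - x \<bullet> n) *\<^sub>R n"
    have "?y - p = pr x - pr p"
      using n by (simp add: pr_def c_def inner_add_left algebra_simps)
    then have "dist ?y p < \<delta>" using that by (simp add: N_iff dist_norm)
    then show ?thesis using \<delta>(3) h(1) by metis
  qed
  show ?thesis
  proof
    show "convex N" unfolding N_def
      using pr bounded_linear_inner_left[of n]
      by (intro convex_Int convex_linear_vimage convex_ball bounded_linear.linear)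
    show "open N" unfolding N_def
      using pr bounded_linear_inner_left[of n]
      by (intro open_Int open_vimage open_ball linear_continuous_on)
    show "p \<in> N" using \<delta> \<open>\<epsilon> > 0\<close> by (simp add: N_iff c_def)
    show "N \<subseteq> ball p r"
    proof
      fix x assume x: "x \<in> N"
      have "x - p = (pr x - pr p) + (x \<bullet> n - c) *\<^sub>R n" by (simp add: pr_def c_def algebra_simps)
      then have "norm (x - p) \<le> norm (pr x - pr p) + \<bar>x \<bullet> n - c\<bar>"
        using norm_triangle_ineq[of "pr x - pr p" "(x \<bullet> n - c) *\<^sub>R n"] n
        by (simp add: norm_eq_sqrt_inner)
      also have "\<dots> < r" using x \<delta> by (simp add: N_iff \<epsilon>_def)
      finally show "x \<in> ball p r" by (simp add: dist_norm norm_minus_commute)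
    qed
    show "c - 3 * \<epsilon> / 4 < h x \<and> h x < c + 3 * \<epsilon> / 4" if "x \<in> N" for x
      using h_near_c[OF that] by linarith
    show "x + (c - 3 * \<epsilon> / 4 - x \<bullet> n) *\<^sub>R n \<in> N" "x + (c + 3 * \<epsilon> / 4 - x \<bullet> n) *\<^sub>R n \<in> N"
      if "x \<in> N" for x
      using vertical[OF that] \<open>\<epsilon> > 0\<close> by simp_all
  qed
qed

lemma in_closure_iff_le_graph:
  fixes B U :: "'a::real_inner set" and h :: "'a \<Rightarrow> real"
  assumes U: "open U" "x \<in> U" and n: "n \<bullet> n = 1"
    and h: "continuous_on UNIV h" "\<And>x s. h (x + s *\<^sub>R n) = h x"
    and BU: "B \<inter> U = {x \<in> U. x \<bullet> n < h x}"
  shows "x \<in> closure B \<longleftrightarrow> x \<bullet> n \<le> h x"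
proof
  assume "x \<in> closure B"
  then have "x \<in> closure (B \<inter> U)" using open_Int_closure_subset[OF U(1)] U(2) by (auto simp: Int_commute)
  also have "\<dots> \<subseteq> {x. x \<bullet> n \<le> h x}"
  proof (rule closure_minimal)
    show "closed {x. x \<bullet> n \<le> h x}" by (intro closed_Collect_le h(1) continuous_intros)
  qed (use BU in auto)
  finally show "x \<bullet> n \<le> h x" by simp
next
  assume "x \<bullet> n \<le> h x"
  then have "x \<in> closure (B \<inter> U)" unfolding BU by (rule in_closure_strict_subgraph[OF U n h(2)])
  then show "x \<in> closure B" using closure_mono[of "B \<inter> U" B] by blast
qed

lemma two_sided_nbhd_below_graph:
  fixes B U V :: "'a::real_inner set" and h :: "'a \<Rightarrow> real"
  assumes B: "open B" and U: "open U" "p \<in> U" and n: "n \<bullet> n = 1"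
    and h: "continuous_on UNIV h" "\<And>x s. h (x + s *\<^sub>R n) = h x"
    and BU: "B \<inter> U = {x \<in> U. x \<bullet> n < h x}" and p: "p \<in> frontier B"
    and V: "open V" "p \<in> V"
  shows "\<exists>N. p \<in> N \<and> N \<subseteq> V \<and> two_sided_nbhd B N"
proof -
  note closure_iff = in_closure_iff_le_graph[OF U(1) _ n h BU]
  have "p \<notin> B" using p B by (simp add: frontier_def interior_open)
  then have hp: "h p = p \<bullet> n" using closure_iff[OF U(2)] p BU U(2) by (force simp: frontier_def)
  obtain r where r: "r > 0" "ball p r \<subseteq> U \<inter> V"
    using openE[OF open_Int[OF U(1) V(1)]] U(2) V(2) by blast
  have cont_p: "isCont h p" using h(1) by (simp add: continuous_on_eq_continuous_at)
  obtain N t\<^sub>1 t\<^sub>2 where N: "convex N" "open N" "p \<in> N" "N \<subseteq> ball p r"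
    and levels: "\<And>x. x \<in> N \<Longrightarrow> t\<^sub>1 < h x \<and> h x < t\<^sub>2"
      "\<And>x. x \<in> N \<Longrightarrow> x + (t\<^sub>1 - x \<bullet> n) *\<^sub>R n \<in> N" "\<And>x. x \<in> N \<Longrightarrow> x + (t\<^sub>2 - x \<bullet> n) *\<^sub>R n \<in> N"
    using cylinder_between_levels[OF n h(2) cont_p hp r(1)] by blast
  have NU: "N \<subseteq> U" and NV: "N \<subseteq> V" using N(4) r(2) by auto
  have flip: "(- n) \<bullet> (- n) = 1" "\<And>x s. - h (x + s *\<^sub>R - n) = - h x"
    using n by (simp_all add: h(2) flip: scaleR_minus_left)
  have inside: "N \<inter> B = {x \<in> N. x \<bullet> n < h x}" using BU NU by blast
  have outside: "N - closure B = {x \<in> N. x \<bullet> - n < - h x}" using closure_iff NU by auto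
  have "two_sided_nbhd B N"
    unfolding two_sided_nbhd_def
  proof (intro conjI)
    show "connected (N - closure B)" unfolding outside
    proof (rule connected_strict_subgraph[OF N(1) flip])
      fix x assume "x \<in> N"
      moreover have "x + (- t\<^sub>2 - x \<bullet> - n) *\<^sub>R - n = x + (t\<^sub>2 - x \<bullet> n) *\<^sub>R n"
        by (simp add: algebra_simps)
      ultimately show "x + (- t\<^sub>2 - x \<bullet> - n) *\<^sub>R - n \<in> N" "- t\<^sub>2 < - h x"
        using levels(1,3) by auto
    qed
    show "connected (N \<inter> B)" unfolding inside
      using levels(1,2) by (intro connected_strict_subgraph[OF N(1) n h(2)]) blast+
    show "N \<inter> frontier B \<subseteq> closure (N - closure B)"
    proof
      fix q assume q: "q \<in> N \<inter> frontier B"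
      then have "q \<notin> B" using B by (simp add: frontier_def interior_open)
      then have "q \<bullet> - n \<le> - h q" using BU NU q by force
      then show "q \<in> closure (N - closure B)"
        unfolding outside using in_closure_strict_subgraph[OF N(2) _ flip] q by blast
    qed
  qed (rule N(2))
  then show ?thesis using N(3) NV by blast
qed

subsection \<open>Separating the exterior\<close>

lemma frontier_connected_component_if_two_sided:
  fixes B :: "'a::real_normed_vector set"
  assumes B: "open B" and N: "two_sided_nbhd B N" "x \<in> N"
    and x: "x \<in> frontier B" and y: "y \<in> N \<inter> B"
  shows "x \<in> frontier (connected_component_set B y)"
proof -
  have "N \<inter> B \<subseteq> connected_component_set B y"
    using y N(1) by (intro connected_component_maximal) (auto simp: two_sided_nbhd_def)
  moreover have "x \<in> closure (N \<inter> B)"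
    using open_Int_closure_subset[of N B] N x by (auto simp: two_sided_nbhd_def frontier_def)
  ultimately have "x \<in> closure (connected_component_set B y)" using closure_mono by blast
  moreover have "x \<notin> connected_component_set B y"
    using x B connected_component_subset by (fastforce simp: frontier_def interior_open)
  ultimately show ?thesis
    using B by (simp add: frontier_def interior_open open_connected_component)
qed

lemma frontier_split_by_exterior_separation:
  fixes A B P\<^sub>1 P\<^sub>2 :: "'a::topological_space set"
  assumes nbhds: "\<And>p. p \<in> frontier B \<Longrightarrow> \<exists>N. p \<in> N \<and> N \<subseteq> A \<and> two_sided_nbhd B N"
    and P: "open P\<^sub>1" "open P\<^sub>2" "P\<^sub>1 \<inter> P\<^sub>2 = {}" "A - closure B = P\<^sub>1 \<union> P\<^sub>2"
  shows "frontier B \<subseteq> closure P\<^sub>1 \<union> closure P\<^sub>2" "frontier B \<inter> closure P\<^sub>1 \<inter> closure P\<^sub>2 = {}"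
proof -
  show "frontier B \<subseteq> closure P\<^sub>1 \<union> closure P\<^sub>2"
  proof
    fix p assume p: "p \<in> frontier B"
    then obtain N where N: "p \<in> N" "N \<subseteq> A" "two_sided_nbhd B N" using nbhds by blast
    then have "p \<in> closure (N - closure B)" using p by (auto simp: two_sided_nbhd_def)
    also have "\<dots> \<subseteq> closure (P\<^sub>1 \<union> P\<^sub>2)" using N(2) P(4) by (intro closure_mono) blast
    finally show "p \<in> closure P\<^sub>1 \<union> closure P\<^sub>2" by (simp add: closure_Un)
  qed
  show "frontier B \<inter> closure P\<^sub>1 \<inter> closure P\<^sub>2 = {}"
  proof (rule ccontr)
    assume "frontier B \<inter> closure P\<^sub>1 \<inter> closure P\<^sub>2 \<noteq> {}"
    then obtain p where p: "p \<in> frontier B" "p \<in> closure P\<^sub>1" "p \<in> closure P\<^sub>2" by blast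
    then obtain N where N: "p \<in> N" "N \<subseteq> A" "two_sided_nbhd B N" using nbhds by blast
    then have "open N" "connected (N - closure B)" by (simp_all add: two_sided_nbhd_def)
    moreover have "N \<inter> P\<^sub>1 \<noteq> {}" "N \<inter> P\<^sub>2 \<noteq> {}"
      using p N(1) open_Int_closure_eq_empty[OF \<open>open N\<close>] by blast+
    ultimately show False
      using connectedD[of "N - closure B" P\<^sub>1 P\<^sub>2] P N(2) by blast
  qed
qed

definition attached :: "'a::topological_space set \<Rightarrow> 'a set \<Rightarrow> 'a set" where
  "attached B P = P \<union> (frontier B \<inter> closure P) \<union>
     {x \<in> B. frontier (connected_component_set B x) \<subseteq> closure P}"

lemma two_sided_nbhd_subset_attached:
  fixes A B P :: "'a::real_normed_vector set"
  assumes B: "open B" and P: "P \<subseteq> A - closure B"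
    and P_clopen: "\<And>T. connected T \<Longrightarrow> T \<subseteq> A - closure B \<Longrightarrow> T \<inter> P \<noteq> {} \<Longrightarrow> T \<subseteq> P"
    and attached_components:
      "\<And>y. y \<in> B \<Longrightarrow> frontier (connected_component_set B y) \<inter> closure P \<noteq> {} \<Longrightarrow>
        frontier (connected_component_set B y) \<subseteq> closure P"
    and N: "two_sided_nbhd B N" "x \<in> N" "N \<subseteq> A" and x: "x \<in> frontier B" "x \<in> closure P"
  shows "N \<subseteq> attached B P"
proof
  have "N \<inter> P \<noteq> {}" using N x open_Int_closure_eq_empty[of N P] by (auto simp: two_sided_nbhd_def)
  then have exterior: "N - closure B \<subseteq> P"
    using P P_clopen[of "N - closure B"] N by (auto simp: two_sided_nbhd_def)
  fix y assume y: "y \<in> N"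
  consider "y \<notin> closure B" | "y \<in> frontier B" | "y \<in> B"
    using B by (auto simp: frontier_def interior_open)
  then show "y \<in> attached B P"
  proof cases
    case 1
    then show ?thesis using exterior y by (auto simp: attached_def)
  next
    case 2
    then have "y \<in> closure (N - closure B)" using N y by (auto simp: two_sided_nbhd_def)
    then have "y \<in> closure P" using exterior closure_mono by blast
    then show ?thesis using 2 by (auto simp: attached_def)
  next
    case 3
    then have "x \<in> frontier (connected_component_set B y)"
      using frontier_connected_component_if_two_sided[OF B N(1,2) x(1)] y by blast
    then show ?thesis using attached_components[OF 3] x(2) 3 by (auto simp: attached_def)
  qed
qed

lemma frontier_component_within_one_side:
  fixes A B P Q :: "'a::real_normed_vector set"
  assumes nbhds: "\<And>p. p \<in> frontier B \<Longrightarrow> \<exists>N. p \<in> N \<and> N \<subseteq> A \<and> two_sided_nbhd B N"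
    and PQ: "open P" "open Q" "P \<inter> Q = {}" "A - closure B = P \<union> Q"
    and "connected (frontier (connected_component_set B x))"
  shows "frontier (connected_component_set B x) \<subseteq> closure P \<or>
    frontier (connected_component_set B x) \<subseteq> closure Q"
  using connected_closedD[OF assms(6), of "closure P" "closure Q"]
    frontier_split_by_exterior_separation[OF nbhds PQ]
    frontier_of_connected_component_subset[of B x] by blast

lemma open_Int_attached:
  fixes A B P Q :: "'a::real_normed_vector set"
  assumes A: "open A" and B: "open B"
    and PQ: "open P" "open Q" "P \<inter> Q = {}" "A - closure B = P \<union> Q"
    and components: "\<And>x. x \<in> B \<Longrightarrow> connected (frontier (connected_component_set B x))"
    and nbhds: "\<And>p. p \<in> frontier B \<Longrightarrow> \<exists>N. p \<in> N \<and> N \<subseteq> A \<and> two_sided_nbhd B N"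
  shows "open (A \<inter> attached B P)"
proof -
  have P: "P \<subseteq> A - closure B" using PQ(4) by blast
  have P_clopen: "T \<subseteq> P" if "connected T" "T \<subseteq> A - closure B" "T \<inter> P \<noteq> {}" for T
    using connectedD[OF that(1) PQ(1,2)] that(2,3) PQ(3,4) by blast
  have attached_components: "frontier (connected_component_set B y) \<subseteq> closure P"
    if "y \<in> B" "frontier (connected_component_set B y) \<inter> closure P \<noteq> {}" for y
    using frontier_component_within_one_side[OF nbhds PQ components[OF that(1)]] that(2)
      frontier_split_by_exterior_separation(2)[OF nbhds PQ]
      frontier_of_connected_component_subset[of B y] by blast
  show ?thesis
    unfolding open_subopen[of "A \<inter> attached B P"]
  proof
    fix x assume x: "x \<in> A \<inter> attached B P"
    consider "x \<in> P" | "x \<in> frontier B" "x \<in> closure P"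
      | "x \<in> B" "frontier (connected_component_set B x) \<subseteq> closure P"
      using x by (auto simp: attached_def)
    then show "\<exists>T. open T \<and> x \<in> T \<and> T \<subseteq> A \<inter> attached B P"
    proof cases
      case 1
      then show ?thesis using PQ(1) P by (intro exI[of _ P]) (auto simp: attached_def)
    next
      case 2
      then obtain N where N: "x \<in> N" "N \<subseteq> A" "two_sided_nbhd B N" using nbhds by blast
      then have "N \<subseteq> attached B P"
        using two_sided_nbhd_subset_attached[OF B P P_clopen attached_components] 2 by blast
      then show ?thesis using N by (intro exI[of _ N]) (auto simp: two_sided_nbhd_def)
    next
      case 3
      have "A \<inter> connected_component_set B x \<subseteq> attached B P"
        using 3 connected_component_eq connected_component_subset
        by (fastforce simp: attached_def)
      then show ?thesis using 3 x A B
        by (intro exI[of _ "A \<inter> connected_component_set B x"]) (auto intro: open_connected_component)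
    qed
  qed
qed

theorem connected_Diff_closure_if_two_sided_nbhds:
  fixes A B :: "'a::real_normed_vector set"
  assumes A: "open A" "connected A" and B: "open B" "B \<noteq> UNIV"
    and components: "\<And>x. x \<in> B \<Longrightarrow> connected (frontier (connected_component_set B x))"
    and nbhds: "\<And>p. p \<in> frontier B \<Longrightarrow> \<exists>N. p \<in> N \<and> N \<subseteq> A \<and> two_sided_nbhd B N"
  shows "connected (A - closure B)"
proof (rule ccontr)
  have "open (A - closure B)" using A(1) by (simp add: open_Diff)
  moreover assume "\<not> connected (A - closure B)"
  ultimately obtain P\<^sub>1 P\<^sub>2 where P: "open P\<^sub>1" "open P\<^sub>2" "P\<^sub>1 \<inter> P\<^sub>2 = {}" "A - closure B = P\<^sub>1 \<union> P\<^sub>2"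
    and nonempty: "P\<^sub>1 \<noteq> {}" "P\<^sub>2 \<noteq> {}"
    using openin_open_trans unfolding connected_openin_eq by metis
  have P': "open P\<^sub>2" "open P\<^sub>1" "P\<^sub>2 \<inter> P\<^sub>1 = {}" "A - closure B = P\<^sub>2 \<union> P\<^sub>1" using P by auto
  note frontier_split = frontier_split_by_exterior_separation[OF nbhds P]
  have "open (A \<inter> attached B P\<^sub>1)" "open (A \<inter> attached B P\<^sub>2)"
    using open_Int_attached[OF A(1) B(1) P components nbhds]
      open_Int_attached[OF A(1) B(1) P' components nbhds] by blast+
  moreover have "A \<subseteq> (A \<inter> attached B P\<^sub>1) \<union> (A \<inter> attached B P\<^sub>2)"
  proof
    fix x assume "x \<in> A"
    then consider "x \<in> A - closure B" | "x \<in> frontier B" | "x \<in> B"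
      using B(1) by (auto simp: frontier_def interior_open)
    then show "x \<in> (A \<inter> attached B P\<^sub>1) \<union> (A \<inter> attached B P\<^sub>2)"
      using \<open>x \<in> A\<close> P(4) frontier_split(1)
        frontier_component_within_one_side[OF nbhds P components]
      by cases (auto simp: attached_def)
  qed
  moreover have "(A \<inter> attached B P\<^sub>1) \<inter> (A \<inter> attached B P\<^sub>2) \<inter> A = {}"
  proof -
    have "frontier (connected_component_set B x) \<noteq> {}" if "x \<in> B" for x
    proof -
      have "x \<in> connected_component_set B x" using that by simp
      moreover have "connected_component_set B x \<noteq> UNIV" using B(2) connected_component_subset by blast
      ultimately show ?thesis unfolding frontier_eq_empty by blast
    qed
    moreover have "frontier B \<subseteq> closure B - B" "B \<subseteq> closure B"
      using B(1) closure_subset by (auto simp: frontier_def interior_open)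
    ultimately show ?thesis
      using P(3,4) frontier_split(2) frontier_of_connected_component_subset[of B]
      unfolding attached_def by blast
  qed
  moreover have "(A \<inter> attached B P\<^sub>1) \<inter> A \<noteq> {}" "(A \<inter> attached B P\<^sub>2) \<inter> A \<noteq> {}"
    using nonempty P(4) by (auto simp: attached_def)
  ultimately show False using connectedD[OF A(2)] by metis
qed

subsection \<open>Domains with \<open>C\<^sup>1\<close> boundary\<close>

lemma C1_boundary_locally_subgraph:
  fixes B :: "'a::euclidean_space set"
  assumes "C1_boundary B" "p \<in> frontier B"
  obtains U n h where "open U" "p \<in> U" "n \<bullet> n = 1" "continuous_on UNIV h"
    "\<And>x s. h (x + s *\<^sub>R n) = h x" "B \<inter> U = {x \<in> U. x \<bullet> n < h x}"
proof -
  obtain U n h where U: "open U" "p \<in> U" and n: "norm n = 1" and "C1_fun h"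
    and h: "\<forall>x. h x = h (x - (x \<bullet> n) *\<^sub>R n)" and BU: "B \<inter> U = {x \<in> U. x \<bullet> n < h x}"
    using bspec[OF assms[unfolded C1_boundary_def]] by blast
  then obtain G where "\<And>x. (h has_derivative (\<lambda>v. G x \<bullet> v)) (at x)"
    unfolding C1_fun_def by blast
  then have cont: "continuous_on UNIV h"
    by (meson continuous_at_imp_continuous_on has_derivative_continuous)
  have unit: "n \<bullet> n = 1" using n by (simp add: norm_eq_1)
  have shift: "h (x + s *\<^sub>R n) = h x" for x s
  proof -
    have "x + s *\<^sub>R n - ((x + s *\<^sub>R n) \<bullet> n) *\<^sub>R n = x - (x \<bullet> n) *\<^sub>R n"
      using unit by (simp add: inner_add_left algebra_simps)
    then show ?thesis using h[rule_format, of "x + s *\<^sub>R n"] h[rule_format, of x] by (simp only:)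
  qed
  show ?thesis by (rule that[OF U unit cont shift BU])
qed

theorem lemma6:
  fixes A B :: "'a::euclidean_space set"
  assumes "open A" and "connected A"
    and "open B" and "bounded B" and "C1_boundary B"
    and "frontier B \<subseteq> A"
    and "\<forall>x\<in>B. connected (frontier (connected_component_set B x))"
  shows "connected (A - closure B)"
proof (rule connected_Diff_closure_if_two_sided_nbhds)
  show "B \<noteq> UNIV" using \<open>bounded B\<close> not_bounded_UNIV by blast
  fix p assume p: "p \<in> frontier B"
  obtain U n h where U: "open U" "p \<in> U" and "n \<bullet> n = 1" "continuous_on UNIV h"
    "\<And>x s. h (x + s *\<^sub>R n) = h x" "B \<inter> U = {x \<in> U. x \<bullet> n < h x}"
    using C1_boundary_locally_subgraph[OF \<open>C1_boundary B\<close> p] by blast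
  moreover have "p \<in> A" using p \<open>frontier B \<subseteq> A\<close> by blast
  ultimately show "\<exists>N. p \<in> N \<and> N \<subseteq> A \<and> two_sided_nbhd B N"
    by (intro two_sided_nbhd_below_graph[OF \<open>open B\<close> U] p \<open>open A\<close>)
qed (use assms in auto)

end
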